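(* If $\lambda$ is a panmagic permutation of $\Omega_m$ and $\rho$ is a panmagic permutation of $\Omega_n$, then the permutation $\lambda\,\dot\times\,\rho$ of $\Omega_{mn}$ defined by $(\lambda\,\dot\times\,\rho)(jn+s)=\lambda(j)\,n+\rho(s)$ for $j\in\Omega_m$, $s\in\Omega_n$, is panmagic.
   Context: $\Omega_n=\{0,1,\dots,n-1\}$. A permutation $\pi$ of $\Omega_n$ is panmagic if its permutation matrix $P_\pi$ (with $(i,j)$ entry $1$ if $i=\pi(j)$ and $0$ otherwise) is panmagic, i.e. the sums of its entries along all rows, all columns, all upward diagonals $\{(i,j): i+j\equiv k \pmod n\}$ and all downward diagonals $\{(i,j): i-j\equiv k\pmod n\}$, $k\in\Omega_n$, are equal; equivalently, the maps $j\mapsto\pi(j)-j$ and $j\mapsto\pi(j)+j$ modulo $n$ are bijections of $\Omega_n$. *)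

theory Defs
  imports Main
begin

text \<open>Omega_n = {0,...,n-1}; a permutation of Omega_n is a map nat => nat that is
  a bijection of {..<n} onto itself (values outside are irrelevant).\<close>

definition perm_of :: "nat \<Rightarrow> (nat \<Rightarrow> nat) \<Rightarrow> bool" where
  "perm_of n p \<longleftrightarrow> bij_betw p {..<n} {..<n}"

definition perm_matrix :: "(nat \<Rightarrow> nat) \<Rightarrow> nat \<Rightarrow> nat \<Rightarrow> nat" where
  "perm_matrix p i j = (if i = p j then 1 else 0)"

definition panmagic_matrix :: "nat \<Rightarrow> (nat \<Rightarrow> nat \<Rightarrow> nat) \<Rightarrow> bool" where
  "panmagic_matrix n M \<longleftrightarrow> (\<exists>c. \<forall>k<n.
      (\<Sum>j<n. M k j) = c \<and>
      (\<Sum>i<n. M i k) = c \<and>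
      (\<Sum>(i,j)\<in>{(i,j). i < n \<and> j < n \<and> (i + j) mod n = k}. M i j) = c \<and>
      (\<Sum>(i,j)\<in>{(i,j). i < n \<and> j < n \<and> (int i - int j) mod int n = int k}. M i j) = c)"

definition panmagic_perm :: "nat \<Rightarrow> (nat \<Rightarrow> nat) \<Rightarrow> bool" where
  "panmagic_perm n p \<longleftrightarrow> perm_of n p \<and> panmagic_matrix n (perm_matrix p)"

definition dot_times :: "nat \<Rightarrow> (nat \<Rightarrow> nat) \<Rightarrow> (nat \<Rightarrow> nat) \<Rightarrow> nat \<Rightarrow> nat" where
  "dot_times n l r x = l (x div n) * n + r (x mod n)"

end

theory Submission
  imports Defs
begin

text \<open>For a permutation \<open>p\<close> of \<open>\<Omega>\<^sub>n\<close>, the matrix sums along the upward and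
  downward diagonals count the \<open>j\<close> with \<open>p j + j\<close>, resp. \<open>p j - j\<close>, in a given residue
  class, so \<open>p\<close> is panmagic iff \<open>j \<mapsto> p j + \<sigma> j\<close> is injective modulo \<open>n\<close> for \<open>\<sigma> = \<plusminus>1\<close>;
  being a permutation is the same condition for \<open>\<sigma> = 0\<close>. Writing \<open>a = j n + s\<close>, the
  value of \<open>dot_times n \<lambda> \<rho>\<close> at \<open>a\<close> plus \<open>\<sigma> a\<close> is \<open>(\<lambda> j + \<sigma> j) n + (\<rho> s + \<sigma> s)\<close>: a congruence of
  two such values modulo \<open>m n\<close> forces first the \<open>s\<close>-parts to agree (reducing modulo \<open>n\<close>),
  and then the \<open>j\<close>-parts (dividing by \<open>n\<close>).\<close>

definition twist_inj :: "int \<Rightarrow> nat \<Rightarrow> (nat \<Rightarrow> nat) \<Rightarrow> bool" where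
  "twist_inj \<sigma> n p \<longleftrightarrow> inj_on (\<lambda>j. (int (p j) + \<sigma> * int j) mod int n) {..<n}"

lemma card_fibres_eq_1_iff_inj_on:
  assumes "finite B" "f ` A \<subseteq> B" "card A = card B"
  shows "(\<forall>k\<in>B. card {a\<in>A. f a = k} = 1) \<longleftrightarrow> inj_on f A"
proof
  assume fibres: "\<forall>k\<in>B. card {a\<in>A. f a = k} = 1"
  show "inj_on f A"
  proof (rule inj_onI)
    fix a b assume "a \<in> A" "b \<in> A" "f a = f b"
    moreover obtain c where "{x\<in>A. f x = f a} = {c}"
      using fibres \<open>a \<in> A\<close> assms(2) by (metis card_1_singletonE image_subset_iff)
    ultimately show "a = b" by (metis (mono_tags, lifting) mem_Collect_eq singletonD)
  qed
next
  assume inj: "inj_on f A"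
  then have "f ` A = B"
    using assms by (metis card_image card_subset_eq)
  show "\<forall>k\<in>B. card {a\<in>A. f a = k} = 1"
  proof
    fix k assume "k \<in> B"
    then obtain a where "a \<in> A" "k = f a" using \<open>f ` A = B\<close> by blast
    then have "{x\<in>A. f x = k} = {a}" using inj by (auto simp: inj_on_def)
    then show "card {x\<in>A. f x = k} = 1" by simp
  qed
qed

lemma perm_matrix_eq_of_bool: "perm_matrix p i j = of_bool (i = p j)"
  by (simp add: perm_matrix_def)

lemma perm_of_iff_twist_inj_0: "perm_of n p \<longleftrightarrow> p ` {..<n} \<subseteq> {..<n} \<and> twist_inj 0 n p"
proof -
  have "twist_inj 0 n p \<longleftrightarrow> inj_on p {..<n}" if into: "p ` {..<n} \<subseteq> {..<n}"
  proof -
    have "twist_inj 0 n p \<longleftrightarrow> inj_on (\<lambda>j. int (p j)) {..<n}"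
      unfolding twist_inj_def using into by (intro inj_on_cong) auto
    also have "\<dots> \<longleftrightarrow> inj_on p {..<n}"
      by (simp add: inj_on_def)
    finally show ?thesis .
  qed
  moreover have "perm_of n p \<longleftrightarrow> p ` {..<n} \<subseteq> {..<n} \<and> inj_on p {..<n}"
    unfolding perm_of_def bij_betw_def by (metis endo_inj_surj finite_lessThan order_refl)
  ultimately show ?thesis by blast
qed

lemma sum_perm_matrix_pairs:
  assumes "p ` {..<n} \<subseteq> {..<n}"
  shows "(\<Sum>(i,j)\<in>{(i,j). i < n \<and> j < n \<and> Q i j}. perm_matrix p i j) = card {j. j < n \<and> Q (p j) j}"
proof -
  let ?S = "{(i,j). i < n \<and> j < n \<and> Q i j}"
  have "finite ?S"
    by (rule finite_subset[of _ "{..<n} \<times> {..<n}"]) auto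
  then have "(\<Sum>(i,j)\<in>?S. perm_matrix p i j) = card (?S \<inter> {x. fst x = p (snd x)})"
    by (simp add: perm_matrix_eq_of_bool case_prod_beta)
  also have "?S \<inter> {x. fst x = p (snd x)} = (\<lambda>j. (p j, j)) ` {j. j < n \<and> Q (p j) j}"
    using assms by auto
  also have "card \<dots> = card {j. j < n \<and> Q (p j) j}"
    by (rule card_image) (auto simp: inj_on_def)
  finally show ?thesis .
qed

lemma sum_perm_matrix_row:
  assumes "perm_of n p" and "k < n"
  shows "(\<Sum>j<n. perm_matrix p k j) = 1"
proof -
  have "(\<Sum>j<n. perm_matrix p k j) = card {j\<in>{..<n}. p j = k}"
    by (simp add: perm_matrix_eq_of_bool Int_def eq_commute)
  also have "\<dots> = 1"
    using assms card_fibres_eq_1_iff_inj_on[where A="{..<n}" and B="{..<n}" and f=p]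
    by (simp add: perm_of_def bij_betw_def)
  finally show ?thesis .
qed

lemma sum_perm_matrix_col:
  assumes "perm_of n p" and "k < n"
  shows "(\<Sum>i<n. perm_matrix p i k) = 1"
proof -
  have "{i. i < n \<and> i = p k} = {p k}"
    using assms by (auto simp: perm_of_def dest: bij_betw_apply)
  then show ?thesis by (simp add: perm_matrix_eq_of_bool Int_def)
qed

lemma card_twist_fibres_eq_1_iff:
  assumes "0 < n"
  shows "(\<forall>k<n. card {j. j < n \<and> (int (p j) + \<sigma> * int j) mod int n = int k} = 1)
    \<longleftrightarrow> twist_inj \<sigma> n p"
proof -
  let ?f = "\<lambda>j. (int (p j) + \<sigma> * int j) mod int n"
  have "?f ` {..<n} \<subseteq> int ` {..<n}"
  proof
    fix x assume "x \<in> ?f ` {..<n}"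
    then have "0 \<le> x" "x < int n" using assms by auto
    then show "x \<in> int ` {..<n}" by (auto intro: image_eqI[of _ _ "nat x"])
  qed
  then have "(\<forall>k\<in>int ` {..<n}. card {j\<in>{..<n}. ?f j = k} = 1) \<longleftrightarrow> twist_inj \<sigma> n p"
    unfolding twist_inj_def by (intro card_fibres_eq_1_iff_inj_on) (auto simp: card_image)
  then show ?thesis by (simp add: Ball_image_comp lessThan_def)
qed

lemma panmagic_perm_iff:
  "panmagic_perm n p \<longleftrightarrow> perm_of n p \<and> twist_inj 1 n p \<and> twist_inj (-1) n p"
proof (cases "perm_of n p \<and> 0 < n")
  case False
  then show ?thesis
    by (auto simp: panmagic_perm_def panmagic_matrix_def perm_of_def twist_inj_def)
next
  case True
  then have into: "p ` {..<n} \<subseteq> {..<n}"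
    by (simp add: perm_of_iff_twist_inj_0)
  define diag where "diag \<sigma> k = card {j. j < n \<and> (int (p j) + \<sigma> * int j) mod int n = int k}" for \<sigma> k
  have up_cond: "(i + j) mod n = k \<longleftrightarrow> (int i + 1 * int j) mod int n = int k" for i j k
    by (metis mult_1 of_nat_add of_nat_eq_iff of_nat_mod)
  have up: "(\<Sum>(i,j)\<in>{(i,j). i < n \<and> j < n \<and> (i + j) mod n = k}. perm_matrix p i j) = diag 1 k" for k
    unfolding up_cond using sum_perm_matrix_pairs[OF into] by (simp add: diag_def)
  have down: "(\<Sum>(i,j)\<in>{(i,j). i < n \<and> j < n \<and> (int i - int j) mod int n = int k}. perm_matrix p i j)
      = diag (-1) k" for k
    using sum_perm_matrix_pairs[OF into] by (simp add: diag_def)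
  have "panmagic_matrix n (perm_matrix p) \<longleftrightarrow> (\<exists>c. \<forall>k<n. 1 = c \<and> diag 1 k = c \<and> diag (-1) k = c)"
    unfolding panmagic_matrix_def up down
    using True by (simp add: sum_perm_matrix_row sum_perm_matrix_col cong: all_cong)
  also have "\<dots> \<longleftrightarrow> (\<forall>k<n. diag 1 k = 1 \<and> diag (-1) k = 1)"
    using True by auto
  finally have "panmagic_matrix n (perm_matrix p) \<longleftrightarrow> (\<forall>k<n. diag 1 k = 1 \<and> diag (-1) k = 1)" .
  moreover have "(\<forall>k<n. diag \<sigma> k = 1) \<longleftrightarrow> twist_inj \<sigma> n p" for \<sigma>
    unfolding diag_def using True by (rule card_twist_fibres_eq_1_iff[OF conjunct2])
  ultimately show ?thesis
    using True by (auto simp: panmagic_perm_def)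
qed

lemma dot_times_image_subset:
  assumes "l ` {..<m} \<subseteq> {..<m}" and "r ` {..<n} \<subseteq> {..<n}"
  shows "dot_times n l r ` {..<m * n} \<subseteq> {..<m * n}"
proof
  fix y assume "y \<in> dot_times n l r ` {..<m * n}"
  then obtain a where a: "a < m * n" and y: "y = dot_times n l r a" by auto
  then have "0 < n" by (auto intro: gr0I)
  have "a div n < m"
    using a by (simp add: less_mult_imp_div_less)
  then have "l (a div n) + 1 \<le> m"
    using assms(1) by auto
  then have "(l (a div n) + 1) * n \<le> m * n" by (rule mult_right_mono) simp
  moreover have "r (a mod n) < n"
    using assms(2) \<open>0 < n\<close> by (simp add: image_subset_iff)
  ultimately show "y \<in> {..<m * n}" unfolding y dot_times_def by simp
qed

lemma dot_times_twist:
  "int (dot_times n l r a) + \<sigma> * int a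
    = (int (l (a div n)) + \<sigma> * int (a div n)) * int n + (int (r (a mod n)) + \<sigma> * int (a mod n))"
proof -
  have "int a = int (a div n) * int n + int (a mod n)"
    by (metis of_nat_add of_nat_mult div_mult_mod_eq)
  then show ?thesis by (simp add: dot_times_def algebra_simps)
qed

lemma twist_inj_dot_times:
  assumes l: "twist_inj \<sigma> m l" and r: "twist_inj \<sigma> n r"
  shows "twist_inj \<sigma> (m * n) (dot_times n l r)"
  unfolding twist_inj_def
proof (rule inj_onI)
  fix a b assume a: "a \<in> {..<m * n}" and b: "b \<in> {..<m * n}"
  assume "(int (dot_times n l r a) + \<sigma> * int a) mod int (m * n)
        = (int (dot_times n l r b) + \<sigma> * int b) mod int (m * n)"
  then have dvd: "int m * int n dvd (int (dot_times n l r a) + \<sigma> * int a)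
        - (int (dot_times n l r b) + \<sigma> * int b)"
    by (simp add: mod_eq_dvd_iff)
  have "0 < n" using a by (auto intro: gr0I)
  define U where "U x = int (l (x div n)) + \<sigma> * int (x div n)" for x
  define V where "V x = int (r (x mod n)) + \<sigma> * int (x mod n)" for x
  have diff: "int m * int n dvd (U a - U b) * int n + (V a - V b)"
    using dvd unfolding dot_times_twist U_def V_def by (simp add: algebra_simps)
  then have "int n dvd (U a - U b) * int n + (V a - V b)"
    by (rule dvd_mult_right)
  then have "int n dvd V a - V b"
    by (simp add: dvd_add_right_iff)
  then have mod_eq: "a mod n = b mod n"
    using r \<open>0 < n\<close> by (simp add: twist_inj_def inj_on_def V_def mod_eq_dvd_iff)
  then have "int m * int n dvd (U a - U b) * int n"
    using diff by (simp add: V_def)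
  then have "int m dvd U a - U b"
    using \<open>0 < n\<close> by simp
  moreover have "a div n < m" "b div n < m"
    using a b by (auto simp: less_mult_imp_div_less)
  ultimately have "a div n = b div n"
    using l by (simp add: twist_inj_def inj_on_def U_def mod_eq_dvd_iff)
  with mod_eq show "a = b" by (metis div_mult_mod_eq)
qed

theorem corollary3p2:
  fixes m n :: nat and l r :: "nat \<Rightarrow> nat"
  assumes "panmagic_perm m l" and "panmagic_perm n r"
  shows "panmagic_perm (m * n) (dot_times n l r)"
  using assms unfolding panmagic_perm_iff perm_of_iff_twist_inj_0
  by (simp add: dot_times_image_subset twist_inj_dot_times)

end
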